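(* The metric space $(\mathcal{J},d_{\mathcal{J}})$ is not locally compact.
   Context: An interval partition is a set $\beta$ of disjoint open subintervals (blocks) of some interval $[0,L]$ that cover $[0,L]$ up to a Lebesgue-null set; write $\|\beta\|:=L$, $\mathrm{Leb}(U)$ for the length of a block $U$, and $\mathcal{I}_H$ for the set of interval partitions. A correspondence between $\beta,\gamma\in\mathcal{I}_H$ is a finite sequence $(U_j,V_j)_{j\in[n]}$, $n\ge0$, of pairs in $\beta\times\gamma$ with $(U_j)_j$, $(V_j)_j$ strictly increasing in left-to-right order. $\mathcal{J}$ is the set of pairs $(\eta,f)$ with $\eta\in\mathcal{I}_H$ and $f\colon[0,\infty]\to[0,\infty)$ right-continuous nondecreasing, constant on every block of $\eta$ and on $[\|\eta\|,\infty]$; $f(U)$ denotes its value on block $U$. $d_{\mathcal{J}}((\eta,f),(\beta,g))$ is the infimum over correspondences $(U_j,V_j)_{j\in[n]}$ between $\eta$ and $\beta$ of the maximum of $\sum_{j}|\mathrm{Leb}(U_j)-\mathrm{Leb}(V_j)|+\|\eta\|-\sum_j\mathrm{Leb}(U_j)$, $\sum_{j}|\mathrm{Leb}(U_j)-\mathrm{Leb}(V_j)|+\|\beta\|-\sum_j\mathrm{Leb}(V_j)$, $\sup_j|f(U_j)-g(V_j)|$ and $|f(\infty)-g(\infty)|$. *)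

theory Defs
  imports "HOL-Analysis.Analysis"
begin

definition is_IP_on :: "real set set \<Rightarrow> real \<Rightarrow> bool" where
  "is_IP_on \<beta> L \<longleftrightarrow> 0 \<le> L
     \<and> (\<forall>U\<in>\<beta>. \<exists>a b. 0 \<le> a \<and> a < b \<and> b \<le> L \<and> U = {a<..<b})
     \<and> disjoint \<beta>
     \<and> {0..L} - \<Union>\<beta> \<in> null_sets lborel"

definition IH :: "real set set set" where
  "IH = {\<beta>. \<exists>L. is_IP_on \<beta> L}"

text \<open>The total length of an interval partition (uniquely determined).\<close>
definition IPnorm :: "real set set \<Rightarrow> real" where
  "IPnorm \<beta> = (THE L. is_IP_on \<beta> L)"

definition Leb :: "real set \<Rightarrow> real" where
  "Leb U = measure lborel U"

definition block_less :: "real set \<Rightarrow> real set \<Rightarrow> bool" where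
  "block_less U V \<longleftrightarrow> (\<forall>x\<in>U. \<forall>y\<in>V. x < y)"

definition correspondence :: "real set set \<Rightarrow> real set set \<Rightarrow> (real set \<times> real set) list \<Rightarrow> bool" where
  "correspondence \<beta> \<gamma> cs \<longleftrightarrow> set cs \<subseteq> \<beta> \<times> \<gamma>
     \<and> sorted_wrt (\<lambda>p q. block_less (fst p) (fst q)) cs
     \<and> sorted_wrt (\<lambda>p q. block_less (snd p) (snd q)) cs"

text \<open>Functions on [0,\<infinity>] are modelled with domain ennreal = [0,\<infinity>].\<close>
definition Jspace :: "(real set set \<times> (ennreal \<Rightarrow> real)) set" where
  "Jspace = {(\<eta>, f). \<eta> \<in> IH
      \<and> (\<forall>x. 0 \<le> f x)
      \<and> mono f
      \<and> (\<forall>x. continuous (at_right x) f)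
      \<and> (\<forall>U\<in>\<eta>. \<forall>x\<in>U. \<forall>y\<in>U. f (ennreal x) = f (ennreal y))
      \<and> (\<forall>x. ennreal (IPnorm \<eta>) \<le> x \<longrightarrow> f x = f (ennreal (IPnorm \<eta>)))}"

definition fblock :: "(ennreal \<Rightarrow> real) \<Rightarrow> real set \<Rightarrow> real" where
  "fblock f U = f (ennreal (SOME x. x \<in> U))"

definition corr_cost ::
  "real set set \<times> (ennreal \<Rightarrow> real) \<Rightarrow> real set set \<times> (ennreal \<Rightarrow> real)
     \<Rightarrow> (real set \<times> real set) list \<Rightarrow> real" where
  "corr_cost p q cs =
     (let \<eta> = fst p; f = snd p; \<beta> = fst q; g = snd q;
          D = sum_list (map (\<lambda>(U,V). \<bar>Leb U - Leb V\<bar>) cs)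
      in max (max (D + IPnorm \<eta> - sum_list (map (\<lambda>(U,V). Leb U) cs))
                  (D + IPnorm \<beta> - sum_list (map (\<lambda>(U,V). Leb V) cs)))
             (max (foldr max (map (\<lambda>(U,V). \<bar>fblock f U - fblock g V\<bar>) cs) 0)
                  \<bar>f top - g top\<bar>))"

definition dJ ::
  "real set set \<times> (ennreal \<Rightarrow> real) \<Rightarrow> real set set \<times> (ennreal \<Rightarrow> real) \<Rightarrow> real" where
  "dJ p q = Inf {corr_cost p q cs | cs. correspondence (fst p) (fst q) cs}"

end

theory Submission
  imports Defs
begin

text \<open>
  Let \<open>x\<^sub>0\<close> be the point of \<open>Jspace\<close> with the empty interval partition. For every \<open>a > 0\<close>
  and \<open>n \<ge> 1\<close>, the partition of \<open>[0, a]\<close> into \<open>n\<close> blocks of length \<open>a / n\<close> (with \<open>f = 0\<close>)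
  lies within distance \<open>a\<close> of \<open>x\<^sub>0\<close>, as the empty correspondence shows. A compact
  neighbourhood \<open>K\<close> of \<open>x\<^sub>0\<close> is covered by the open sets \<open>{\<parallel>\<eta>\<parallel> < a/2}\<close> and
  \<open>{\<eta> has a block longer than t}\<close>, \<open>t > 0\<close>; a finite subcover leaves a single \<open>t\<close>, and the
  equal-block point with \<open>a / n \<le> t\<close> then lies in \<open>K\<close> but in none of these sets.

  Since the statement is about the metric topology, \<open>dJ\<close> has to be shown to be a metric.
  Correspondences are handled as finite sets of pairs of blocks on which the left-to-right
  orders of both sides agree (matchings). Matchings compose by relational composition, which
  gives the triangle inequality; and in a matching of cost \<open>e\<close> matched blocks have left
  endpoints within \<open>e\<close>, which gives \<open>dJ x y = 0 \<Longrightarrow> x = y\<close>.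
\<close>

section \<open>Blocks and interval partitions\<close>

lemma Leb_Ioo: "a \<le> b \<Longrightarrow> Leb {a<..<b} = b - a"
  unfolding Leb_def by simp

lemma block_less_Ioo_iff:
  fixes a b c d :: real
  assumes "a < b" "c < d"
  shows "block_less {a<..<b} {c<..<d} \<longleftrightarrow> b \<le> c"
proof
  assume "block_less {a<..<b} {c<..<d}"
  then have less: "x < y" if "a < x" "x < b" "c < y" "y < d" for x y
    using that unfolding block_less_def by simp
  show "b \<le> c"
  proof (rule ccontr)
    assume "\<not> b \<le> c"
    show False
    proof (cases "a < d")
      case True
      define m where "m = (max a c + min b d) / 2"
      have "a < m" "m < b" "c < m" "m < d"
        using assms True \<open>\<not> b \<le> c\<close> unfolding m_def max_def min_def by auto
      then show False using less[of m m] by simp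
    next
      case False
      have "(a + b) / 2 < (c + d) / 2" by (rule less) (use assms in auto)
      then show False using False assms by (simp add: field_simps)
    qed
  qed
next
  assume "b \<le> c"
  then show "block_less {a<..<b} {c<..<d}"
    unfolding block_less_def by (metis greaterThanLessThan_iff less_le_trans order_less_trans)
qed

lemma block_less_asym:
  assumes "U \<noteq> {}" "V \<noteq> {}" "block_less U V"
  shows "\<not> block_less V U"
proof
  assume "block_less V U"
  obtain x y where "x \<in> U" "y \<in> V" using assms(1,2) by blast
  then have "x < y" "y < x" using assms(3) \<open>block_less V U\<close> unfolding block_less_def by auto
  then show False by simp
qed

lemma is_IP_onD:
  assumes "is_IP_on \<eta> L"
  shows "0 \<le> L" "\<And>U. U \<in> \<eta> \<Longrightarrow> \<exists>a b. 0 \<le> a \<and> a < b \<and> b \<le> L \<and> U = {a<..<b}"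
    "disjoint \<eta>" "{0..L} - \<Union>\<eta> \<in> null_sets lborel"
  using assms unfolding is_IP_on_def by (elim conjE; assumption | blast)+

lemma is_IP_on_empty: "is_IP_on {} 0"
  unfolding is_IP_on_def by (simp add: finite_imp_null_set_lborel)

lemma empty_in_IH: "{} \<in> IH"
  unfolding IH_def using is_IP_on_empty by blast

lemma is_IP_on_gap:
  assumes "is_IP_on \<eta> L" "0 \<le> t" "r \<le> L" "{t<..<r} \<inter> \<Union>\<eta> = {}"
  shows "r \<le> t"
proof (rule ccontr)
  assume "\<not> r \<le> t"
  have sub: "{t<..<r} \<subseteq> {0..L} - \<Union>\<eta>"
  proof
    fix x assume x: "x \<in> {t<..<r}"
    then have "x \<notin> \<Union>\<eta>" using assms(4) by blast
    moreover have "x \<in> {0..L}" using x assms(2,3) by simp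
    ultimately show "x \<in> {0..L} - \<Union>\<eta>" by blast
  qed
  have "{t<..<r} \<in> null_sets lborel"
    by (rule null_sets_subset[OF is_IP_onD(4)[OF assms(1)] _ sub]) simp
  then have "measure lborel {t<..<r} = 0" by (rule measure_eq_0_null_sets)
  then show False using \<open>\<not> r \<le> t\<close> by simp
qed

lemma is_IP_on_le:
  assumes "is_IP_on \<eta> L" "is_IP_on \<eta> L'"
  shows "L \<le> L'"
proof (rule is_IP_on_gap[OF assms(1)])
  show "0 \<le> L'" by (rule is_IP_onD(1)[OF assms(2)])
  have "U \<subseteq> {..L'}" if "U \<in> \<eta>" for U
    using is_IP_onD(2)[OF assms(2) that] by force
  then show "{L'<..<L} \<inter> \<Union>\<eta> = {}" by fastforce
qed simp

lemma is_IP_on_unique: "is_IP_on \<eta> L \<Longrightarrow> is_IP_on \<eta> L' \<Longrightarrow> L = L'"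
  using is_IP_on_le order_antisym by blast

lemma IPnorm_eqI: "is_IP_on \<eta> L \<Longrightarrow> IPnorm \<eta> = L"
  unfolding IPnorm_def using is_IP_on_unique by blast

lemma IH_is_IP_on: "\<eta> \<in> IH \<Longrightarrow> is_IP_on \<eta> (IPnorm \<eta>)"
  unfolding IH_def using IPnorm_eqI by auto

lemma IPnorm_nonneg: "\<eta> \<in> IH \<Longrightarrow> 0 \<le> IPnorm \<eta>"
  using IH_is_IP_on is_IP_onD(1) by blast

lemma IH_blockE:
  assumes "\<eta> \<in> IH" "U \<in> \<eta>"
  obtains a b where "0 \<le> a" "a < b" "b \<le> IPnorm \<eta>" "U = {a<..<b}"
  using is_IP_onD(2)[OF IH_is_IP_on[OF assms(1)] assms(2)] by blast

lemma IH_block_nonempty: "\<eta> \<in> IH \<Longrightarrow> U \<in> \<eta> \<Longrightarrow> U \<noteq> {}"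
  by (erule IH_blockE) auto

lemma IH_block_Leb_pos: "\<eta> \<in> IH \<Longrightarrow> U \<in> \<eta> \<Longrightarrow> 0 < Leb U"
  by (erule IH_blockE) (auto simp: Leb_Ioo)

lemma IH_block_subset: "\<eta> \<in> IH \<Longrightarrow> U \<in> \<eta> \<Longrightarrow> U \<subseteq> {0..IPnorm \<eta>}"
  by (erule IH_blockE) auto

lemma IH_Ioo_block_bounds:
  assumes "\<eta> \<in> IH" "{a<..<b} \<in> \<eta>" "a < b"
  shows "0 \<le> a \<and> b \<le> IPnorm \<eta>"
proof -
  obtain a' b' where "0 \<le> a'" "a' < b'" "b' \<le> IPnorm \<eta>" "{a<..<b} = {a'<..<b'}"
    by (rule IH_blockE[OF assms(1,2)])
  then show ?thesis using assms(3) by (simp add: greaterThanLessThan_eq_iff)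
qed

lemma IH_block_eqI: "\<eta> \<in> IH \<Longrightarrow> U \<in> \<eta> \<Longrightarrow> V \<in> \<eta> \<Longrightarrow> s \<in> U \<Longrightarrow> s \<in> V \<Longrightarrow> U = V"
  using is_IP_onD(3)[OF IH_is_IP_on] unfolding disjoint_def pairwise_def disjnt_def by blast

lemma IH_blocks_trichotomy:
  assumes "\<eta> \<in> IH" "U \<in> \<eta>" "V \<in> \<eta>"
  shows "U = V \<or> block_less U V \<or> block_less V U"
proof -
  obtain a b where U: "a < b" "U = {a<..<b}" using IH_blockE[OF assms(1,2)] by metis
  obtain c d where V: "c < d" "V = {c<..<d}" using IH_blockE[OF assms(1,3)] by metis
  have "U = V" if "\<not> b \<le> c" "\<not> d \<le> a"
  proof (rule IH_block_eqI[OF assms])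
    have "max a c < min b d" using U V that by auto
    then show "(max a c + min b d) / 2 \<in> U" "(max a c + min b d) / 2 \<in> V" using U V by auto
  qed
  then show ?thesis using U V by (auto simp: block_less_Ioo_iff)
qed

lemma IH_block_less_Inf:
  assumes "\<eta> \<in> IH" "U \<in> \<eta>" "V \<in> \<eta>" "block_less U V"
  shows "Inf U < Inf V"
proof -
  obtain a b where U: "a < b" "U = {a<..<b}" using IH_blockE[OF assms(1,2)] by metis
  obtain c d where V: "c < d" "V = {c<..<d}" using IH_blockE[OF assms(1,3)] by metis
  show ?thesis using assms(4) U V by (simp add: block_less_Ioo_iff)
qed

lemma is_IP_on_block_fmeasurable: "is_IP_on \<eta> L \<Longrightarrow> U \<in> \<eta> \<Longrightarrow> U \<in> fmeasurable lborel"
  using is_IP_onD(2) by (fastforce simp: fmeasurable_def)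

lemma sum_Leb_eq_measure_Union:
  assumes "is_IP_on \<eta> L" "finite F" "F \<subseteq> \<eta>"
  shows "sum Leb F = measure lborel (\<Union>F)"
proof -
  have "disjoint F" using is_IP_onD(3)[OF assms(1)] assms(3) by (rule pairwise_subset)
  then show ?thesis
    unfolding Leb_def using assms is_IP_on_block_fmeasurable by (subst measure_Union') auto
qed

lemma sum_Leb_blocks_le:
  assumes "\<eta> \<in> IH" "finite F" "F \<subseteq> \<eta>" "\<Union>F \<subseteq> {s..t}" "s \<le> t"
  shows "sum Leb F \<le> t - s"
proof -
  note IP = IH_is_IP_on[OF assms(1)]
  have "sum Leb F = measure lborel (\<Union>F)" by (rule sum_Leb_eq_measure_Union[OF IP assms(2,3)])
  also have "\<dots> \<le> measure lborel {s..t}"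
  proof (rule measure_mono_fmeasurable)
    show "\<Union>F \<in> sets lborel"
      using assms(2,3) is_IP_on_block_fmeasurable[OF IP] fmeasurableD
      by (intro sets.finite_Union) blast+
  qed (use assms(4) in \<open>auto intro: fmeasurable_compact\<close>)
  finally show ?thesis using assms(5) by simp
qed

lemma IP_length_le_measure:
  assumes "is_IP_on \<eta> L"
  shows "L \<le> measure lborel (\<Union>\<eta>)"
proof -
  note null = is_IP_onD(4)[OF assms]
  have blocks_sub: "\<Union>\<eta> \<subseteq> {0..L}" using is_IP_onD(2)[OF assms] by fastforce
  have "open (\<Union>\<eta>)" using is_IP_onD(2)[OF assms] by (intro open_Union) force
  then have "\<Union>\<eta> \<in> sets lborel" by simp
  then have "L = measure lborel (\<Union>\<eta> \<union> ({0..L} - \<Union>\<eta>))"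
    using blocks_sub is_IP_onD(1)[OF assms] by (simp add: Un_absorb1 Un_Diff_cancel)
  also have "\<dots> \<le> measure lborel (\<Union>\<eta>) + measure lborel ({0..L} - \<Union>\<eta>)"
    using null \<open>\<Union>\<eta> \<in> sets lborel\<close> by (intro measure_Un_le) auto
  finally show ?thesis using measure_eq_0_null_sets[OF null] by simp
qed

lemma IP_finite_blocks_approx:
  assumes IP: "is_IP_on \<eta> L" and "0 < e"
  shows "\<exists>F. finite F \<and> F \<subseteq> \<eta> \<and> L - e < sum Leb F"
proof (cases "\<eta> = {}")
  case True
  then show ?thesis using IP_length_le_measure[OF IP] \<open>0 < e\<close> by (intro exI[of _ "{}"]) auto
next
  case False
  have "countable \<eta>"
    using is_IP_onD(2,3)[OF IP] by (intro countable_disjoint_open_subsets) force+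
  define A where "A = from_nat_into \<eta>"
  have range_A: "range A = \<eta>" unfolding A_def using False \<open>countable \<eta>\<close> by simp
  define B where "B n = \<Union>(A ` {..<n})" for n
  have B_sets: "B n \<in> sets lborel" for n
    unfolding B_def using range_A is_IP_on_block_fmeasurable[OF IP] fmeasurableD
    by (intro sets.finite_Union) blast+
  have B_Union: "(\<Union>n. B n) = \<Union>\<eta>" unfolding B_def range_A[symmetric] by fastforce
  have "emeasure lborel (\<Union>\<eta>) \<le> emeasure lborel {0..L}"
    using is_IP_onD(2)[OF IP] by (intro emeasure_mono) fastforce+
  then have finite_measure: "emeasure lborel (\<Union>n. B n) \<noteq> \<infinity>"
    unfolding B_Union by (auto simp: emeasure_lborel_Icc_eq top_unique)
  have "(\<lambda>n. measure lborel (B n)) \<longlonglongrightarrow> measure lborel (\<Union>n. B n)"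
  proof (rule Lim_measure_incseq)
    show "incseq B"
      unfolding B_def incseq_def by (meson UN_mono image_mono lessThan_subset_iff order_refl)
  qed (use B_sets finite_measure in auto)
  moreover have "L - e < measure lborel (\<Union>n. B n)"
    using IP_length_le_measure[OF IP] \<open>0 < e\<close> unfolding B_Union by simp
  ultimately have "\<forall>\<^sub>F n in sequentially. L - e < measure lborel (B n)"
    by (rule order_tendstoD(1))
  then obtain n where "L - e < measure lborel (B n)" by (auto simp: eventually_sequentially)
  moreover have "measure lborel (B n) = sum Leb (A ` {..<n})"
    unfolding B_def using range_A by (subst sum_Leb_eq_measure_Union[OF IP]) auto
  ultimately show ?thesis using range_A by (intro exI[of _ "A ` {..<n}"]) auto
qed

lemma IH_blocks_dense:
  assumes "\<eta> \<in> IH" "z < ennreal (IPnorm \<eta>)" "z < w"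
  shows "\<exists>U\<in>\<eta>. \<exists>s\<in>U. z < ennreal s \<and> ennreal s < w"
proof -
  obtain y where y: "z < y" "y < w" "y < ennreal (IPnorm \<eta>)"
    using dense[of z "min w (ennreal (IPnorm \<eta>))"] assms(2,3) by auto
  obtain r where r: "0 \<le> r" "y = ennreal r" using y(3) by (cases y) auto
  obtain t where t: "0 \<le> t" "z = ennreal t" using y(1,3) by (cases z) auto
  have "t < r" "r \<le> IPnorm \<eta>" using y(1,3) r t by (auto simp: ennreal_less_iff)
  then have "{t<..<r} \<inter> \<Union>\<eta> \<noteq> {}"
    using is_IP_on_gap[OF IH_is_IP_on[OF assms(1)] t(1)] by fastforce
  then obtain U s where "U \<in> \<eta>" "s \<in> U" "t < s" "s < r" by force
  moreover have "ennreal s < y" using \<open>t < s\<close> \<open>s < r\<close> r t by (simp add: ennreal_less_iff)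
  ultimately show ?thesis using t y(2) by (intro bexI) (auto simp: ennreal_less_iff)
qed

section \<open>Matchings\<close>

definition matching :: "real set set \<Rightarrow> real set set \<Rightarrow> (real set \<times> real set) set \<Rightarrow> bool" where
  "matching \<eta> \<beta> P \<longleftrightarrow> finite P \<and> P \<subseteq> \<eta> \<times> \<beta>
     \<and> (\<forall>U V U' V'. (U, V) \<in> P \<longrightarrow> (U', V') \<in> P \<longrightarrow> (block_less U U' \<longleftrightarrow> block_less V V'))"

definition mismatch :: "(real set \<times> real set) set \<Rightarrow> real" where
  "mismatch P = (\<Sum>(U, V)\<in>P. \<bar>Leb U - Leb V\<bar>)"

definition left_cost :: "real set set \<Rightarrow> (real set \<times> real set) set \<Rightarrow> real" where
  "left_cost \<eta> P = mismatch P + IPnorm \<eta> - (\<Sum>(U, V)\<in>P. Leb U)"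

lemma matchingD:
  assumes "matching \<eta> \<beta> P" "p \<in> P" "q \<in> P"
  shows "block_less (fst p) (fst q) \<longleftrightarrow> block_less (snd p) (snd q)"
proof -
  obtain U V U' V' where pq: "p = (U, V)" "q = (U', V')" by (cases p, cases q)
  have "\<forall>U V U' V'. (U, V) \<in> P \<longrightarrow> (U', V') \<in> P \<longrightarrow> (block_less U U' \<longleftrightarrow> block_less V V')"
    using assms(1) unfolding matching_def by (elim conjE)
  then have "block_less U U' \<longleftrightarrow> block_less V V'" using assms(2,3) pq by simp
  then show ?thesis using pq by simp
qed

lemma matching_converse_iff: "matching \<beta> \<eta> (P\<inverse>) \<longleftrightarrow> matching \<eta> \<beta> P"
  unfolding matching_def by (auto simp: converse_subset_swap)

lemma matching_subset: "matching \<eta> \<beta> P \<Longrightarrow> Q \<subseteq> P \<Longrightarrow> matching \<eta> \<beta> Q"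
  unfolding matching_def by (meson finite_subset subset_iff order_trans)

lemma matching_empty: "matching \<eta> \<beta> {}"
  unfolding matching_def by simp

lemma Id_on_eq_image: "Id_on F = (\<lambda>x. (x, x)) ` F"
  by (auto simp: Id_on_def)

lemma matching_Id_on: "finite F \<Longrightarrow> F \<subseteq> \<eta> \<Longrightarrow> matching \<eta> \<eta> (Id_on F)"
  unfolding matching_def by (auto simp: Id_on_eq_image)

lemma sum_Id_on: "(\<Sum>(x, y)\<in>Id_on F. f x y) = (\<Sum>x\<in>F. f x x)"
  unfolding Id_on_eq_image by (simp add: sum.reindex inj_on_def)

lemma matching_relcomp: "matching \<eta> \<beta> P1 \<Longrightarrow> matching \<beta> \<gamma> P2 \<Longrightarrow> matching \<eta> \<gamma> (P1 O P2)"
  unfolding matching_def by (auto simp: finite_relcomp)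

lemma matching_inj_fst:
  assumes "\<beta> \<in> IH" "matching \<eta> \<beta> P"
  shows "inj_on fst P"
proof (rule inj_onI)
  fix p q assume pq: "p \<in> P" "q \<in> P" "fst p = fst q"
  obtain U V V' where p: "p = (U, V)" and q: "q = (U, V')" using pq(3) by (metis prod.collapse)
  have blocks: "V \<in> \<beta>" "V' \<in> \<beta>" using assms(2) pq p q unfolding matching_def by auto
  have "block_less V V' \<longleftrightarrow> block_less V' V"
    using assms(2) pq p q unfolding matching_def by metis
  then have "V = V'"
    using IH_blocks_trichotomy[OF assms(1) blocks] block_less_asym IH_block_nonempty[OF assms(1)]
      blocks
    by metis
  then show "p = q" using p q by simp
qed

lemma matching_inj_snd:
  assumes "\<eta> \<in> IH" "matching \<eta> \<beta> P"
  shows "inj_on snd P"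
proof (rule inj_onI)
  fix p q assume pq: "p \<in> P" "q \<in> P" "snd p = snd q"
  have "inj_on fst (P\<inverse>)" using assms matching_converse_iff by (blast intro: matching_inj_fst)
  moreover have "prod.swap r \<in> P\<inverse>" if "r \<in> P" for r using that by (cases r) auto
  ultimately have "prod.swap p = prod.swap q" using pq by (metis inj_onD fst_swap)
  then show "p = q" by (metis swap_swap)
qed

lemma sum_converse: "(\<Sum>(U, V)\<in>P\<inverse>. f U V) = (\<Sum>(U, V)\<in>P. f V U)"
proof -
  have "P\<inverse> = prod.swap ` P" by auto
  then show ?thesis by (simp add: sum.reindex case_prod_unfold)
qed

lemma mismatch_converse: "mismatch (P\<inverse>) = mismatch P"
  unfolding mismatch_def sum_converse by (simp add: abs_minus_commute)

lemma mismatch_nonneg: "0 \<le> mismatch P"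
  unfolding mismatch_def by (rule sum_nonneg) auto

lemma mismatch_mono: "finite P \<Longrightarrow> Q \<subseteq> P \<Longrightarrow> mismatch Q \<le> mismatch P"
  unfolding mismatch_def by (rule sum_mono2) auto

lemma mismatch_ge_pair:
  assumes "finite P" "(U, V) \<in> P"
  shows "\<bar>Leb U - Leb V\<bar> \<le> mismatch P"
proof -
  have "(\<lambda>(U, V). \<bar>Leb U - Leb V\<bar>) (U, V) \<le> mismatch P"
    unfolding mismatch_def by (rule member_le_sum[OF assms(2)]) (auto simp: assms(1))
  then show ?thesis by simp
qed

lemma sum_fst_le_mismatch_plus_snd: "(\<Sum>(U, V)\<in>P. Leb U) \<le> mismatch P + (\<Sum>(U, V)\<in>P. Leb V)"
  unfolding mismatch_def sum.distrib[symmetric] by (rule sum_mono) auto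

lemma matching_sum_fst_eq:
  assumes "\<beta> \<in> IH" "matching \<eta> \<beta> P"
  shows "(\<Sum>(U, V)\<in>P. Leb U) = sum Leb (Domain P)"
  using matching_inj_fst[OF assms] by (simp add: Domain_fst sum.reindex case_prod_unfold)

lemma matching_sum_fst_le:
  assumes "\<eta> \<in> IH" "\<beta> \<in> IH" "matching \<eta> \<beta> P" "\<Union>(Domain P) \<subseteq> {s..t}" "s \<le> t"
  shows "(\<Sum>(U, V)\<in>P. Leb U) \<le> t - s"
  unfolding matching_sum_fst_eq[OF assms(2,3)]
  using assms(1,3-5) unfolding matching_def by (intro sum_Leb_blocks_le) (auto simp: Domain_fst)

lemma matching_sum_fst_le_IPnorm:
  assumes "\<eta> \<in> IH" "\<beta> \<in> IH" "matching \<eta> \<beta> P"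
  shows "(\<Sum>(U, V)\<in>P. Leb U) \<le> IPnorm \<eta>"
proof -
  have "Domain P \<subseteq> \<eta>" using assms(3) unfolding matching_def by blast
  then have "\<Union>(Domain P) \<subseteq> {0..IPnorm \<eta>}" using IH_block_subset[OF assms(1)] by blast
  from matching_sum_fst_le[OF assms this IPnorm_nonneg[OF assms(1)]] show ?thesis by simp
qed

lemma mismatch_le_left_cost:
  "\<eta> \<in> IH \<Longrightarrow> \<beta> \<in> IH \<Longrightarrow> matching \<eta> \<beta> P \<Longrightarrow> mismatch P \<le> left_cost \<eta> P"
  unfolding left_cost_def using matching_sum_fst_le_IPnorm by (simp add: algebra_simps)

lemma unmatched_Leb_le_left_cost:
  assumes "\<eta> \<in> IH" "\<beta> \<in> IH" "matching \<eta> \<beta> P" "U \<in> \<eta>" "U \<notin> Domain P"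
  shows "Leb U \<le> left_cost \<eta> P"
proof -
  have fin: "finite (Domain P)" using assms(3) unfolding matching_def by (simp add: finite_Domain)
  have "Leb U + sum Leb (Domain P) = sum Leb (insert U (Domain P))"
    using fin assms(5) by simp
  also have "\<dots> \<le> IPnorm \<eta> - 0"
  proof (rule sum_Leb_blocks_le[OF assms(1)])
    show "insert U (Domain P) \<subseteq> \<eta>" using assms(3,4) unfolding matching_def by blast
    then show "\<Union>(insert U (Domain P)) \<subseteq> {0..IPnorm \<eta>}" using IH_block_subset[OF assms(1)] by blast
  qed (use fin IPnorm_nonneg[OF assms(1)] in auto)
  finally show ?thesis
    unfolding left_cost_def matching_sum_fst_eq[OF assms(2,3)] using mismatch_nonneg[of P] by simp
qed

lemma matched_left_endpoint_le_left_cost: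
  assumes \<eta>: "\<eta> \<in> IH" and \<beta>: "\<beta> \<in> IH" and P: "matching \<eta> \<beta> P"
    and UV: "({a<..<b}, {c<..<d}) \<in> P" "a < b" "c < d"
  shows "a - c \<le> left_cost \<eta> P"
proof -
  define Q where "Q = {(U, V) \<in> P. block_less U {a<..<b}}"
  have fin: "finite P" and Q: "Q \<subseteq> P" using P unfolding matching_def Q_def by auto
  have U: "{a<..<b} \<in> \<eta>" using UV P unfolding matching_def by auto
  have b_le: "b \<le> IPnorm \<eta>" using IH_Ioo_block_bounds[OF \<eta> U UV(2)] by simp
  have "\<Union>(Domain (P - Q)) \<subseteq> {a..IPnorm \<eta>}"
  proof
    fix x assume "x \<in> \<Union>(Domain (P - Q))"
    then obtain U V where UV': "(U, V) \<in> P" "\<not> block_less U {a<..<b}" "x \<in> U"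
      unfolding Q_def by blast
    have "U \<in> \<eta>" using UV'(1) P unfolding matching_def by blast
    then obtain a' b' where U': "0 \<le> a'" "a' < b'" "b' \<le> IPnorm \<eta>" "U = {a'<..<b'}"
      by (rule IH_blockE[OF \<eta>])
    have "a \<le> a'"
      using IH_blocks_trichotomy[OF \<eta> \<open>U \<in> \<eta>\<close> U] UV'(2) U' UV(2) by (auto simp: block_less_Ioo_iff)
    then show "x \<in> {a..IPnorm \<eta>}" using UV'(3) U' by auto
  qed
  then have right: "(\<Sum>(U, V)\<in>P - Q. Leb U) \<le> IPnorm \<eta> - a"
    using matching_sum_fst_le[OF \<eta> \<beta> matching_subset[OF P]] UV(2) b_le by fastforce
  have "\<Union>(Domain (Q\<inverse>)) \<subseteq> {0..c}"
  proof
    fix x assume "x \<in> \<Union>(Domain (Q\<inverse>))"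
    then obtain U V where UV': "(U, V) \<in> P" "block_less U {a<..<b}" "x \<in> V"
      unfolding Q_def by blast
    then have "block_less V {c<..<d}" using P UV(1) unfolding matching_def by blast
    moreover have "V \<in> \<beta>" using UV'(1) P unfolding matching_def by blast
    then obtain c' d' where "0 \<le> c'" "c' < d'" "V = {c'<..<d'}" by (rule IH_blockE[OF \<beta>])
    ultimately show "x \<in> {0..c}" using UV'(3) UV(3) by (auto simp: block_less_Ioo_iff)
  qed
  moreover have "0 \<le> c" using UV P IH_Ioo_block_bounds[OF \<beta> _ UV(3)] unfolding matching_def by blast
  ultimately have left: "(\<Sum>(U, V)\<in>Q. Leb V) \<le> c"
    using matching_sum_fst_le[OF \<beta> \<eta>, of "Q\<inverse>" 0 c] matching_converse_iff matching_subset[OF P Q]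
    by (simp add: sum_converse)
  have "(\<Sum>(U, V)\<in>P. Leb U) = (\<Sum>(U, V)\<in>Q. Leb U) + (\<Sum>(U, V)\<in>P - Q. Leb U)"
    using fin Q by (simp add: sum.subset_diff)
  moreover have "(\<Sum>(U, V)\<in>Q. Leb U) \<le> mismatch P + (\<Sum>(U, V)\<in>Q. Leb V)"
    using sum_fst_le_mismatch_plus_snd[of Q] mismatch_mono[OF fin Q] by linarith
  ultimately show ?thesis unfolding left_cost_def using left right by linarith
qed

definition chains :: "('a \<times> 'b) set \<Rightarrow> ('b \<times> 'c) set \<Rightarrow> (('a \<times> 'b) \<times> ('b \<times> 'c)) set" where
  "chains P1 P2 = {(p, q) \<in> P1 \<times> P2. snd p = fst q}"

lemma inj_on_chains:
  assumes "inj_on fst P1" "inj_on snd P1" "inj_on fst P2"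
  shows "inj_on (\<lambda>(p, q). (fst p, snd q)) (chains P1 P2)"
    and "inj_on fst (chains P1 P2)" "inj_on snd (chains P1 P2)"
proof -
  show "inj_on (\<lambda>(p, q). (fst p, snd q)) (chains P1 P2)"
  proof (rule inj_onI, clarify)
    fix p q p' q' assume pq: "(p, q) \<in> chains P1 P2" "(p', q') \<in> chains P1 P2" "fst p = fst p'"
    then have "p = p'" unfolding chains_def using inj_onD[OF assms(1)] by blast
    then show "p = p' \<and> q = q'" using pq unfolding chains_def using inj_onD[OF assms(3)] by auto
  qed
  show "inj_on fst (chains P1 P2)"
  proof (rule inj_onI)
    fix t t' assume tt: "t \<in> chains P1 P2" "t' \<in> chains P1 P2" "fst t = fst t'"
    obtain p q p' q' where t: "t = (p, q)" and t': "t' = (p', q')" by (cases t, cases t')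
    have "fst q = fst q'" "q \<in> P2" "q' \<in> P2" using tt unfolding t t' chains_def by auto
    then have "q = q'" by (rule inj_onD[OF assms(3)])
    then show "t = t'" using tt(3) t t' by simp
  qed
  show "inj_on snd (chains P1 P2)"
  proof (rule inj_onI)
    fix t t' assume tt: "t \<in> chains P1 P2" "t' \<in> chains P1 P2" "snd t = snd t'"
    obtain p q p' q' where t: "t = (p, q)" and t': "t' = (p', q')" by (cases t, cases t')
    have "snd p = snd p'" "p \<in> P1" "p' \<in> P1" using tt unfolding t t' chains_def by auto
    then have "p = p'" by (rule inj_onD[OF assms(2)])
    then show "t = t'" using tt(3) t t' by simp
  qed
qed

lemma mismatch_relcomp_le:
  assumes \<eta>: "\<eta> \<in> IH" and \<beta>: "\<beta> \<in> IH" and \<gamma>: "\<gamma> \<in> IH"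
    and P1: "matching \<eta> \<beta> P1" and P2: "matching \<beta> \<gamma> P2"
  shows "mismatch (P1 O P2) \<le> mismatch {(U, V) \<in> P1. V \<in> Domain P2} + mismatch P2"
proof -
  let ?T = "chains P1 P2"
  note inj = inj_on_chains[OF matching_inj_fst[OF \<beta> P1] matching_inj_snd[OF \<eta> P1]
      matching_inj_fst[OF \<gamma> P2]]
  have join: "(\<lambda>(p, q). (fst p, snd q)) ` ?T = P1 O P2" unfolding chains_def by force
  have fst_T: "fst ` ?T = {(U, V) \<in> P1. V \<in> Domain P2}" unfolding chains_def by force
  have snd_T: "snd ` ?T \<subseteq> P2" unfolding chains_def by auto
  define g where "g p = \<bar>Leb (fst p) - Leb (snd p)\<bar>" for p :: "real set \<times> real set"
  have "mismatch (P1 O P2) = (\<Sum>(p, q)\<in>?T. \<bar>Leb (fst p) - Leb (snd q)\<bar>)"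
    unfolding mismatch_def join[symmetric] sum.reindex[OF inj(1)] by (simp add: case_prod_unfold)
  also have "\<dots> \<le> (\<Sum>(p, q)\<in>?T. g p + g q)"
    by (rule sum_mono) (auto simp: chains_def g_def)
  also have "\<dots> = mismatch (fst ` ?T) + mismatch (snd ` ?T)"
    unfolding mismatch_def sum.reindex[OF inj(2)] sum.reindex[OF inj(3)]
    by (simp add: sum.distrib case_prod_unfold g_def)
  also have "\<dots> \<le> mismatch {(U, V) \<in> P1. V \<in> Domain P2} + mismatch P2"
    using mismatch_mono[OF _ snd_T] P2 fst_T unfolding matching_def by simp
  finally show ?thesis .
qed

lemma left_cost_relcomp_le:
  assumes \<eta>: "\<eta> \<in> IH" and \<beta>: "\<beta> \<in> IH" and \<gamma>: "\<gamma> \<in> IH"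
    and P1: "matching \<eta> \<beta> P1" and P2: "matching \<beta> \<gamma> P2"
  shows "left_cost \<eta> (P1 O P2) \<le> left_cost \<eta> P1 + left_cost \<beta> P2"
proof -
  define C where "C = {(U, V) \<in> P1. V \<in> Domain P2}"
  have fin: "finite P1" and C: "C \<subseteq> P1" using P1 unfolding matching_def C_def by auto
  have "(\<Sum>(U, W)\<in>P1 O P2. Leb U) = sum Leb (Domain (P1 O P2))"
    by (rule matching_sum_fst_eq[OF \<gamma> matching_relcomp[OF P1 P2]])
  also have "Domain (P1 O P2) = Domain C" unfolding C_def by blast
  also have "sum Leb (Domain C) = (\<Sum>(U, V)\<in>C. Leb U)"
    by (rule matching_sum_fst_eq[OF \<beta> matching_subset[OF P1 C], symmetric])
  finally have sum_comp: "(\<Sum>(U, W)\<in>P1 O P2. Leb U) = (\<Sum>(U, V)\<in>C. Leb U)" .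
  have "(\<Sum>(U, V)\<in>P1 - C. Leb V) + (\<Sum>(V, W)\<in>P2. Leb V)
      = sum Leb (Range (P1 - C)) + sum Leb (Domain P2)"
    using matching_sum_fst_eq[OF \<eta>, of \<beta> "(P1 - C)\<inverse>"] matching_sum_fst_eq[OF \<gamma> P2]
      matching_converse_iff matching_subset[OF P1]
    by (simp add: sum_converse)
  also have "\<dots> = sum Leb (Range (P1 - C) \<union> Domain P2)"
    using P1 P2 unfolding matching_def C_def
    by (intro sum.union_disjoint[symmetric]) (auto simp: finite_Range finite_Domain)
  also have "\<dots> \<le> IPnorm \<beta> - 0"
  proof (rule sum_Leb_blocks_le[OF \<beta>])
    show "Range (P1 - C) \<union> Domain P2 \<subseteq> \<beta>" using P1 P2 unfolding matching_def by blast
    then show "\<Union>(Range (P1 - C) \<union> Domain P2) \<subseteq> {0..IPnorm \<beta>}" using IH_block_subset[OF \<beta>] by blast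
  qed (use P1 P2 IPnorm_nonneg[OF \<beta>] in \<open>auto simp: matching_def finite_Range finite_Domain\<close>)
  finally have packing: "(\<Sum>(U, V)\<in>P1 - C. Leb V) + (\<Sum>(V, W)\<in>P2. Leb V) \<le> IPnorm \<beta>" by simp
  have "mismatch P1 = mismatch C + mismatch (P1 - C)"
    unfolding mismatch_def using fin C by (simp add: sum.subset_diff)
  moreover have "(\<Sum>(U, V)\<in>P1. Leb U) = (\<Sum>(U, V)\<in>C. Leb U) + (\<Sum>(U, V)\<in>P1 - C. Leb U)"
    using fin C by (simp add: sum.subset_diff)
  moreover note sum_fst_le_mismatch_plus_snd[of "P1 - C"]
    mismatch_relcomp_le[OF assms, folded C_def]
  ultimately show ?thesis unfolding left_cost_def sum_comp using packing by linarith
qed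

section \<open>Matching costs and correspondences\<close>

definition matching_cost ::
  "real set set \<times> (ennreal \<Rightarrow> real) \<Rightarrow> real set set \<times> (ennreal \<Rightarrow> real)
     \<Rightarrow> (real set \<times> real set) set \<Rightarrow> real" where
  "matching_cost p q P =
     max (max (left_cost (fst p) P) (left_cost (fst q) (P\<inverse>)))
         (max (Max (insert 0 ((\<lambda>(U, V). \<bar>fblock (snd p) U - fblock (snd q) V\<bar>) ` P)))
              \<bar>snd p top - snd q top\<bar>)"

lemma matching_cost_ge:
  shows "left_cost (fst p) P \<le> matching_cost p q P"
    and "left_cost (fst q) (P\<inverse>) \<le> matching_cost p q P"
    and "\<bar>snd p top - snd q top\<bar> \<le> matching_cost p q P"
    and "0 \<le> matching_cost p q P"
  unfolding matching_cost_def by simp_all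

lemma matching_cost_ge_fblock:
  assumes "finite P" "(U, V) \<in> P"
  shows "\<bar>fblock (snd p) U - fblock (snd q) V\<bar> \<le> matching_cost p q P"
proof -
  have "\<bar>fblock (snd p) U - fblock (snd q) V\<bar>
      \<le> Max (insert 0 ((\<lambda>(U, V). \<bar>fblock (snd p) U - fblock (snd q) V\<bar>) ` P))"
    using assms by (intro Max_ge) force+
  then show ?thesis unfolding matching_cost_def by linarith
qed

lemma matching_cost_Id_on: "matching_cost (\<eta>, f) (\<eta>, f) (Id_on F) = max (IPnorm \<eta> - sum Leb F) 0"
proof -
  have "(\<lambda>(U, V). \<bar>fblock f U - fblock f V\<bar>) ` Id_on F \<subseteq> {0}" by auto
  then have "Max (insert 0 ((\<lambda>(U, V). \<bar>fblock f U - fblock f V\<bar>) ` Id_on F)) = 0"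
    by (metis Max_singleton insert_absorb2 subset_singletonD insert_absorb empty_iff singletonI)
  then show ?thesis
    unfolding matching_cost_def left_cost_def mismatch_def by (simp add: sum_Id_on)
qed

lemma matching_cost_relcomp_le:
  assumes x: "fst x \<in> IH" and y: "fst y \<in> IH" and z: "fst z \<in> IH"
    and P1: "matching (fst x) (fst y) P1" and P2: "matching (fst y) (fst z) P2"
  shows "matching_cost x z (P1 O P2) \<le> matching_cost x y P1 + matching_cost y z P2"
proof -
  let ?B = "matching_cost x y P1 + matching_cost y z P2"
  note cost1 = matching_cost_ge[where p=x and q=y and P=P1]
    and cost2 = matching_cost_ge[where p=y and q=z and P=P2]
  have "left_cost (fst x) (P1 O P2) \<le> ?B"
    using left_cost_relcomp_le[OF x y z P1 P2] cost1(1) cost2(1) by linarith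
  moreover have "left_cost (fst z) ((P1 O P2)\<inverse>) \<le> ?B"
  proof -
    have "matching (fst z) (fst y) (P2\<inverse>)" "matching (fst y) (fst x) (P1\<inverse>)"
      using P1 P2 matching_converse_iff by blast+
    from left_cost_relcomp_le[OF z y x this] show ?thesis
      using cost1(2) cost2(2) by (simp add: converse_relcomp)
  qed
  moreover have "\<bar>fblock (snd x) U - fblock (snd z) W\<bar> \<le> ?B" if UW: "(U, W) \<in> P1 O P2" for U W
  proof -
    obtain V where "(U, V) \<in> P1" "(V, W) \<in> P2" using UW by blast
    then show ?thesis
      using matching_cost_ge_fblock[of P1 U V x y] matching_cost_ge_fblock[of P2 V W y z] P1 P2
      unfolding matching_def by linarith
  qed
  then have "Max (insert 0 ((\<lambda>(U, W). \<bar>fblock (snd x) U - fblock (snd z) W\<bar>) ` (P1 O P2))) \<le> ?B"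
    using P1 P2 cost1(4) cost2(4) unfolding matching_def
    by (subst Max_le_iff) (auto simp: finite_relcomp)
  moreover have "\<bar>snd x top - snd z top\<bar> \<le> ?B"
    using cost1(3) cost2(3) by linarith
  ultimately show ?thesis unfolding matching_cost_def[of x z] max.bounded_iff by blast
qed

lemma IPnorm_le_matching_cost:
  assumes "fst p \<in> IH" "fst q \<in> IH" "matching (fst p) (fst q) P"
  shows "IPnorm (fst q) \<le> IPnorm (fst p) + matching_cost p q P"
proof -
  have "(\<Sum>(U, V)\<in>P. Leb V) \<le> mismatch P + (\<Sum>(U, V)\<in>P. Leb U)"
    using sum_fst_le_mismatch_plus_snd[of "P\<inverse>"] by (simp add: sum_converse mismatch_converse)
  moreover have "left_cost (fst q) (P\<inverse>) \<le> matching_cost p q P" by (rule matching_cost_ge(2))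
  ultimately show ?thesis
    using matching_sum_fst_le_IPnorm[OF assms]
    unfolding left_cost_def by (simp add: sum_converse mismatch_converse)
qed

lemma foldr_max_eq_Max: "foldr max (map h xs) (0::real) = Max (insert 0 (h ` set xs))"
proof (induction xs)
  case (Cons a xs)
  have "Max (insert 0 (h ` set (a # xs))) = Max (insert (h a) (insert 0 (h ` set xs)))"
    by (simp add: insert_commute)
  then show ?case using Cons by simp
qed simp

lemma corr_cost_eq_matching_cost:
  assumes "distinct cs"
  shows "corr_cost p q cs = matching_cost p q (set cs)"
proof -
  have "sum_list (map (\<lambda>(U, V). f U V) cs) = (\<Sum>(U, V)\<in>set cs. f U V)" for f :: "_ \<Rightarrow> _ \<Rightarrow> real"
    using assms by (simp add: sum_list_distinct_conv_sum_set)
  then show ?thesis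
    unfolding corr_cost_def matching_cost_def left_cost_def Let_def foldr_max_eq_Max
    by (simp add: mismatch_def[symmetric] mismatch_converse sum_converse)
qed

lemma sorted_wrt_irrefl_imp_distinct:
  "sorted_wrt R xs \<Longrightarrow> (\<And>x. x \<in> set xs \<Longrightarrow> \<not> R x x) \<Longrightarrow> distinct xs"
  by (induction xs) auto

lemma correspondence_imp_matching:
  assumes \<eta>: "\<eta> \<in> IH" and \<beta>: "\<beta> \<in> IH" and cs: "correspondence \<eta> \<beta> cs"
  shows "matching \<eta> \<beta> (set cs)" "distinct cs"
proof -
  have sub: "set cs \<subseteq> \<eta> \<times> \<beta>" and
    sorted: "sorted_wrt (\<lambda>p q. block_less (fst p) (fst q)) cs"
      "sorted_wrt (\<lambda>p q. block_less (snd p) (snd q)) cs"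
    using cs unfolding correspondence_def by auto
  have ne: "fst p \<noteq> {}" "snd p \<noteq> {}" if "p \<in> set cs" for p
    using that sub IH_block_nonempty[OF \<eta>] IH_block_nonempty[OF \<beta>] by auto
  show "distinct cs"
    using sorted(1) by (rule sorted_wrt_irrefl_imp_distinct) (use ne block_less_asym in blast)
  have "block_less (fst (cs ! i)) (fst (cs ! j)) \<longleftrightarrow> block_less (snd (cs ! i)) (snd (cs ! j))"
    if "i < length cs" "j < length cs" for i j
  proof (cases i j rule: linorder_cases)
    case less
    then show ?thesis using sorted that by (simp add: sorted_wrt_iff_nth_less)
  next
    case equal
    then show ?thesis using ne that block_less_asym by (metis nth_mem)
  next
    case greater
    then have "block_less (fst (cs ! j)) (fst (cs ! i))" "block_less (snd (cs ! j)) (snd (cs ! i))"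
      using sorted that by (simp_all add: sorted_wrt_iff_nth_less)
    then show ?thesis using ne that block_less_asym by (metis nth_mem)
  qed
  then show "matching \<eta> \<beta> (set cs)"
    unfolding matching_def using sub by (metis finite_set fst_conv snd_conv in_set_conv_nth)
qed

lemma matching_imp_correspondence:
  assumes \<eta>: "\<eta> \<in> IH" and \<beta>: "\<beta> \<in> IH" and P: "matching \<eta> \<beta> P"
  obtains cs where "correspondence \<eta> \<beta> cs" "distinct cs" "set cs = P"
proof -
  define key where "key p = Inf (fst p)" for p :: "real set \<times> real set"
  have fin: "finite P" and sub: "P \<subseteq> \<eta> \<times> \<beta>" using P unfolding matching_def by auto
  have key_less: "block_less (fst p) (fst q)" if "p \<in> P" "q \<in> P" "key p < key q" for p q
    using IH_blocks_trichotomy[OF \<eta>, of "fst p" "fst q"] IH_block_less_Inf[OF \<eta>, of "fst q" "fst p"]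
      that sub unfolding key_def by fastforce
  have inj_key: "inj_on key P"
  proof (rule inj_onI)
    fix p q assume pq: "p \<in> P" "q \<in> P" "key p = key q"
    then have "fst p = fst q"
      using IH_blocks_trichotomy[OF \<eta>, of "fst p" "fst q"] IH_block_less_Inf[OF \<eta>] sub
      unfolding key_def by (metis SigmaD1 less_irrefl prod.collapse subsetD)
    then show "p = q" using matching_inj_fst[OF \<beta> P] pq by (auto dest: inj_onD)
  qed
  interpret folding_insort_key "(\<le>) :: real \<Rightarrow> real \<Rightarrow> bool" "(<)" P key
    by (intro folding_insort_key.intro linorder_class.linorder_axioms)
      (simp add: folding_insort_key_axioms_def inj_key)
  obtain cs where sorted: "sorted_wrt (<) (map key cs)" and set_cs: "set cs = P"
    by (rule finite_set_strict_sorted[OF order_refl fin])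
  then have sorted_key: "sorted_wrt (\<lambda>p q. key p < key q) cs" by (simp add: sorted_wrt_map)
  then have "distinct cs" by (rule sorted_wrt_irrefl_imp_distinct) simp
  have "sorted_wrt (\<lambda>p q. block_less (fst p) (fst q) \<and> block_less (snd p) (snd q)) cs"
  proof (rule sorted_wrt_mono_rel[OF _ sorted_key])
    fix p q assume "p \<in> set cs" "q \<in> set cs" "key p < key q"
    then have "p \<in> P" "q \<in> P" "block_less (fst p) (fst q)" using set_cs key_less by auto
    then show "block_less (fst p) (fst q) \<and> block_less (snd p) (snd q)"
      using matchingD[OF P] by blast
  qed
  then have "sorted_wrt (\<lambda>p q. block_less (fst p) (fst q)) cs"
    "sorted_wrt (\<lambda>p q. block_less (snd p) (snd q)) cs"
    by (rule sorted_wrt_mono_rel[rotated]; simp)+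
  then have "correspondence \<eta> \<beta> cs" unfolding correspondence_def using sub set_cs by simp
  then show ?thesis using that \<open>distinct cs\<close> set_cs by blast
qed

lemma dJ_eq_Inf_matching_cost:
  assumes "fst p \<in> IH" "fst q \<in> IH"
  shows "dJ p q = Inf {matching_cost p q P | P. matching (fst p) (fst q) P}"
proof -
  have "{corr_cost p q cs | cs. correspondence (fst p) (fst q) cs}
      = {matching_cost p q P | P. matching (fst p) (fst q) P}"
  proof safe
    fix cs assume "correspondence (fst p) (fst q) cs"
    then show "\<exists>P. corr_cost p q cs = matching_cost p q P \<and> matching (fst p) (fst q) P"
      using correspondence_imp_matching[OF assms] corr_cost_eq_matching_cost by blast
  next
    fix P assume "matching (fst p) (fst q) P"
    then obtain cs where "correspondence (fst p) (fst q) cs" "distinct cs" "set cs = P"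
      by (rule matching_imp_correspondence[OF assms])
    then show "\<exists>cs. matching_cost p q P = corr_cost p q cs \<and> correspondence (fst p) (fst q) cs"
      using corr_cost_eq_matching_cost by metis
  qed
  then show ?thesis unfolding dJ_def by simp
qed

lemma dJ_le_matching_cost:
  assumes "fst p \<in> IH" "fst q \<in> IH" "matching (fst p) (fst q) P"
  shows "dJ p q \<le> matching_cost p q P"
  unfolding dJ_eq_Inf_matching_cost[OF assms(1,2)]
  using assms(3) by (intro cInf_lower bdd_belowI[of _ 0]) (auto simp: matching_cost_ge(4))

lemma dJ_less_imp_matching:
  assumes "fst p \<in> IH" "fst q \<in> IH" "dJ p q < r"
  obtains P where "matching (fst p) (fst q) P" "matching_cost p q P < r"
  using cInf_lessD[of "{matching_cost p q P | P. matching (fst p) (fst q) P}" r]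
    matching_empty assms
  unfolding dJ_eq_Inf_matching_cost[OF assms(1,2)] by blast

lemma dJ_ge_top:
  assumes "fst p \<in> IH" "fst q \<in> IH"
  shows "\<bar>snd p top - snd q top\<bar> \<le> dJ p q"
  unfolding dJ_eq_Inf_matching_cost[OF assms]
  using matching_empty by (intro cInf_greatest) (auto simp: matching_cost_ge(3))

lemma dJ_le_max_IPnorm:
  assumes "fst p \<in> IH" "fst q \<in> IH"
  shows "dJ p q \<le> max (max (IPnorm (fst p)) (IPnorm (fst q))) \<bar>snd p top - snd q top\<bar>"
proof -
  have "dJ p q \<le> matching_cost p q {}" by (rule dJ_le_matching_cost[OF assms matching_empty])
  also have "\<dots> = max (max (IPnorm (fst p)) (IPnorm (fst q))) \<bar>snd p top - snd q top\<bar>"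
    using IPnorm_nonneg[OF assms(1)] IPnorm_nonneg[OF assms(2)]
    unfolding matching_cost_def left_cost_def mismatch_def by simp
  finally show ?thesis .
qed

section \<open>\<open>dJ\<close> is a metric on \<open>Jspace\<close>\<close>

lemma dJ_nonneg: "0 \<le> dJ p q"
proof -
  have "correspondence (fst p) (fst q) []" unfolding correspondence_def by simp
  then show ?thesis unfolding dJ_def
    by (intro cInf_greatest) (auto simp: corr_cost_def Let_def)
qed

lemma corr_cost_swap: "corr_cost q p (map prod.swap cs) = corr_cost p q cs"
proof -
  have mismatch: "sum_list (map (\<lambda>(U, V). \<bar>Leb U - Leb V\<bar>) (map prod.swap cs))
      = sum_list (map (\<lambda>(U, V). \<bar>Leb U - Leb V\<bar>) cs)"
    by (induction cs) (auto simp: abs_minus_commute)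
  have left: "sum_list (map (\<lambda>(U, V). Leb U) (map prod.swap cs))
      = sum_list (map (\<lambda>(U, V). Leb V) cs)"
    and right: "sum_list (map (\<lambda>(U, V). Leb V) (map prod.swap cs))
      = sum_list (map (\<lambda>(U, V). Leb U) cs)"
    by (induction cs) auto
  have block_values: "map (\<lambda>(U, V). \<bar>fblock (snd q) U - fblock (snd p) V\<bar>) (map prod.swap cs)
      = map (\<lambda>(U, V). \<bar>fblock (snd p) U - fblock (snd q) V\<bar>) cs"
    by (induction cs) (auto simp: abs_minus_commute)
  show ?thesis
    unfolding corr_cost_def Let_def mismatch left right block_values
    by (simp add: abs_minus_commute max.commute)
qed

lemma correspondence_swap: "correspondence \<eta> \<beta> cs \<Longrightarrow> correspondence \<beta> \<eta> (map prod.swap cs)"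
  unfolding correspondence_def by (auto simp: sorted_wrt_map)

text \<open>\<open>Metric_space\<close> requires symmetry for all pairs, not only for points of \<open>Jspace\<close>, so it
  is proved on lists of pairs rather than on matchings.\<close>

lemma dJ_commute: "dJ p q = dJ q p"
proof -
  have swap: "{corr_cost p q cs | cs. correspondence (fst p) (fst q) cs}
      \<subseteq> {corr_cost q p cs | cs. correspondence (fst q) (fst p) cs}" for p q
  proof safe
    fix cs assume "correspondence (fst p) (fst q) cs"
    then show "\<exists>cs'. corr_cost p q cs = corr_cost q p cs' \<and> correspondence (fst q) (fst p) cs'"
      using corr_cost_swap correspondence_swap by metis
  qed
  have "{corr_cost p q cs | cs. correspondence (fst p) (fst q) cs}
      = {corr_cost q p cs | cs. correspondence (fst q) (fst p) cs}"
    by (rule subset_antisym[OF swap swap])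
  then show ?thesis unfolding dJ_def by simp
qed

lemma Jspace_fst_IH: "x \<in> Jspace \<Longrightarrow> fst x \<in> IH"
  unfolding Jspace_def by auto

lemma JspaceD:
  assumes "(\<eta>, f) \<in> Jspace"
  shows "\<eta> \<in> IH" "mono f" "\<And>z. continuous (at_right z) f"
    and "\<And>U s. U \<in> \<eta> \<Longrightarrow> s \<in> U \<Longrightarrow> f (ennreal s) = fblock f U"
    and "\<And>z. ennreal (IPnorm \<eta>) \<le> z \<Longrightarrow> f z = f top"
proof -
  have "\<eta> \<in> IH \<and> (\<forall>x. 0 \<le> f x) \<and> mono f \<and> (\<forall>x. continuous (at_right x) f)
      \<and> (\<forall>U\<in>\<eta>. \<forall>x\<in>U. \<forall>y\<in>U. f (ennreal x) = f (ennreal y))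
      \<and> (\<forall>x. ennreal (IPnorm \<eta>) \<le> x \<longrightarrow> f x = f (ennreal (IPnorm \<eta>)))"
    using assms unfolding Jspace_def mem_Collect_eq prod.case .
  then have J: "\<eta> \<in> IH" "mono f" "\<forall>z. continuous (at_right z) f"
    "\<forall>U\<in>\<eta>. \<forall>s\<in>U. \<forall>r\<in>U. f (ennreal s) = f (ennreal r)"
    "\<forall>z. ennreal (IPnorm \<eta>) \<le> z \<longrightarrow> f z = f (ennreal (IPnorm \<eta>))"
    by blast+
  then show "\<eta> \<in> IH" "mono f" "\<And>z. continuous (at_right z) f" by blast+
  show "f (ennreal s) = fblock f U" if "U \<in> \<eta>" "s \<in> U" for U s
    using J(4) that some_in_eq[of U] unfolding fblock_def by blast
  show "f z = f top" if "ennreal (IPnorm \<eta>) \<le> z" for z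
    using J(5) that by (metis top_greatest)
qed

lemma zero_fun_in_Jspace: "\<eta> \<in> IH \<Longrightarrow> (\<eta>, \<lambda>_. 0) \<in> Jspace"
  unfolding Jspace_def by (auto simp: mono_def)

lemma dJ_self:
  assumes "x \<in> Jspace"
  shows "dJ x x = 0"
proof -
  obtain \<eta> f where x: "x = (\<eta>, f)" by fastforce
  have \<eta>: "\<eta> \<in> IH" using Jspace_fst_IH[OF assms] x by simp
  have "dJ x x \<le> e" if "0 < e" for e
  proof -
    obtain F where F: "finite F" "F \<subseteq> \<eta>" "IPnorm \<eta> - e < sum Leb F"
      using IP_finite_blocks_approx[OF IH_is_IP_on[OF \<eta>] \<open>0 < e\<close>] by blast
    have "dJ x x \<le> matching_cost x x (Id_on F)"
      using \<eta> matching_Id_on[OF F(1,2)] x by (intro dJ_le_matching_cost) auto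
    also have "\<dots> \<le> e" using F(3) \<open>0 < e\<close> x by (simp add: matching_cost_Id_on)
    finally show ?thesis .
  qed
  then have "dJ x x \<le> 0" by (rule field_le_epsilon) simp
  then show ?thesis using dJ_nonneg[of x x] by linarith
qed

lemma dJ_triangle:
  assumes "x \<in> Jspace" "y \<in> Jspace" "z \<in> Jspace"
  shows "dJ x z \<le> dJ x y + dJ y z"
proof (rule field_le_epsilon)
  fix e :: real assume "0 < e"
  have x: "fst x \<in> IH" and y: "fst y \<in> IH" and z: "fst z \<in> IH"
    using assms Jspace_fst_IH by auto
  obtain P1 where P1: "matching (fst x) (fst y) P1" "matching_cost x y P1 < dJ x y + e / 2"
    using dJ_less_imp_matching[OF x y, of "dJ x y + e / 2"] \<open>0 < e\<close> by auto
  obtain P2 where P2: "matching (fst y) (fst z) P2" "matching_cost y z P2 < dJ y z + e / 2"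
    using dJ_less_imp_matching[OF y z, of "dJ y z + e / 2"] \<open>0 < e\<close> by auto
  have "dJ x z \<le> matching_cost x z (P1 O P2)"
    by (rule dJ_le_matching_cost[OF x z matching_relcomp[OF P1(1) P2(1)]])
  also have "\<dots> \<le> matching_cost x y P1 + matching_cost y z P2"
    by (rule matching_cost_relcomp_le[OF x y z P1(1) P2(1)])
  finally show "dJ x z \<le> dJ x y + dJ y z + e" using P1(2) P2(2) by linarith
qed

lemma matched_blocks_near:
  assumes x: "fst x \<in> IH" and y: "fst y \<in> IH" and P: "matching (fst x) (fst y) P"
    and cost: "matching_cost x y P \<le> e"
    and UV: "({a<..<b}, {c<..<d}) \<in> P" "a < b" "c < d"
  shows "\<bar>c - a\<bar> \<le> e" "\<bar>(d - c) - (b - a)\<bar> \<le> e"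
    and "\<bar>fblock (snd x) {a<..<b} - fblock (snd y) {c<..<d}\<bar> \<le> e"
proof -
  have P': "matching (fst y) (fst x) (P\<inverse>)" using P matching_converse_iff by blast
  note cost_ge = matching_cost_ge[where p=x and q=y and P=P]
  have "a - c \<le> e"
    using matched_left_endpoint_le_left_cost[OF x y P UV] cost_ge(1) cost by linarith
  moreover have "c - a \<le> e"
    using matched_left_endpoint_le_left_cost[OF y x P' _ UV(3,2)] UV(1) cost_ge(2) cost by fastforce
  ultimately show "\<bar>c - a\<bar> \<le> e" by linarith
  have fin: "finite P" using P unfolding matching_def by blast
  have "\<bar>Leb {a<..<b} - Leb {c<..<d}\<bar> \<le> mismatch P" by (rule mismatch_ge_pair[OF fin UV(1)])
  also have "\<dots> \<le> e"
    using mismatch_le_left_cost[OF x y P] cost_ge(1) cost by linarith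
  finally show "\<bar>(d - c) - (b - a)\<bar> \<le> e" using UV(2,3) by (simp add: Leb_Ioo abs_minus_commute)
  show "\<bar>fblock (snd x) {a<..<b} - fblock (snd y) {c<..<d}\<bar> \<le> e"
    using matching_cost_ge_fblock[OF fin UV(1), of x y] cost by linarith
qed

lemma block_near_if_dJ_less:
  assumes x: "x \<in> Jspace" and y: "y \<in> Jspace" and U: "{a<..<b} \<in> fst x" "a < b"
    and e: "dJ x y < e" "e \<le> (b - a) / 8"
  obtains c d where "{c<..<d} \<in> fst y" "c < d" "(a + b) / 2 \<in> {c<..<d}"
    "\<bar>c - a\<bar> \<le> e" "\<bar>d - b\<bar> \<le> 2 * e"
    "\<bar>fblock (snd x) {a<..<b} - fblock (snd y) {c<..<d}\<bar> \<le> e"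
proof -
  have x\<^sub>I: "fst x \<in> IH" and y\<^sub>I: "fst y \<in> IH" using x y Jspace_fst_IH by auto
  obtain P where P: "matching (fst x) (fst y) P" "matching_cost x y P < e"
    by (rule dJ_less_imp_matching[OF x\<^sub>I y\<^sub>I e(1)])
  have "\<not> Leb {a<..<b} \<le> left_cost (fst x) P"
    using P(2) matching_cost_ge(1)[where p=x and q=y and P=P] e(2) U(2)
    by (simp add: Leb_Ioo)
  then obtain V where UV: "({a<..<b}, V) \<in> P"
    using unmatched_Leb_le_left_cost[OF x\<^sub>I y\<^sub>I P(1) U(1)] by blast
  then have "V \<in> fst y" using P(1) unfolding matching_def by blast
  then obtain c d where cd: "c < d" "V = {c<..<d}" by (rule IH_blockE[OF y\<^sub>I])
  note near =
    matched_blocks_near[OF x\<^sub>I y\<^sub>I P(1) less_imp_le[OF P(2)] UV[unfolded cd(2)] U(2) cd(1)]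
  have "\<bar>d - b\<bar> \<le> 2 * e" using near(1,2) by linarith
  moreover have "(a + b) / 2 \<in> {c<..<d}"
    using near(1,2) e(2) U(2) by (auto simp: abs_le_iff field_simps)
  ultimately show ?thesis using that \<open>V \<in> fst y\<close> cd near(1,3) by blast
qed

lemma dJ_eq_0_block:
  assumes x: "x \<in> Jspace" and y: "y \<in> Jspace" and "dJ x y = 0" and U: "U \<in> fst x"
  shows "U \<in> fst y \<and> fblock (snd x) U = fblock (snd y) U"
proof -
  obtain a b where ab: "a < b" "U = {a<..<b}" by (rule IH_blockE[OF Jspace_fst_IH[OF x] U])
  note near = block_near_if_dJ_less[OF x y U[unfolded ab(2)] ab(1)]
  have "dJ x y < (b - a) / 8" using \<open>dJ x y = 0\<close> ab(1) by simp
  then obtain c d where V: "{c<..<d} \<in> fst y" "c < d" "(a + b) / 2 \<in> {c<..<d}"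
    using near[OF _ order_refl] by metis
  \<comment> \<open>all blocks of \<open>fst y\<close> close to \<open>U\<close> contain its midpoint, so they are the same block\<close>
  have bounds: "\<bar>c - a\<bar> \<le> e \<and> \<bar>d - b\<bar> \<le> 2 * e \<and> \<bar>fblock (snd x) U - fblock (snd y) {c<..<d}\<bar> \<le> e"
    if "0 < e" for e
  proof -
    have "dJ x y < min e ((b - a) / 8)" using \<open>dJ x y = 0\<close> \<open>0 < e\<close> ab(1) by simp
    then obtain c' d' where V': "{c'<..<d'} \<in> fst y" "c' < d'" "(a + b) / 2 \<in> {c'<..<d'}"
      and close: "\<bar>c' - a\<bar> \<le> min e ((b - a) / 8)" "\<bar>d' - b\<bar> \<le> 2 * min e ((b - a) / 8)"
        "\<bar>fblock (snd x) {a<..<b} - fblock (snd y) {c'<..<d'}\<bar> \<le> min e ((b - a) / 8)"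
      using near min.cobounded2 by metis
    have "{c'<..<d'} = {c<..<d}" using IH_block_eqI[OF Jspace_fst_IH[OF y] V'(1) V(1) V'(3) V(3)] .
    then have "c' = c" "d' = d" using V(2) V'(2) by (simp_all add: greaterThanLessThan_eq_iff)
    then show ?thesis using close ab(2) by auto
  qed
  have "c - a = 0" "fblock (snd x) U - fblock (snd y) {c<..<d} = 0"
    by (rule dense_eq0_I; use bounds in blast)+
  moreover have "d - b = 0"
  proof (rule dense_eq0_I)
    fix e :: real assume "0 < e"
    then show "\<bar>d - b\<bar> \<le> e" using bounds[of "e / 2"] by simp
  qed
  ultimately show ?thesis using V(1) ab by auto
qed

lemma mono_le_at_right_if_agree_densely:
  fixes f g :: "'a::linorder_topology \<Rightarrow> 'b::linorder_topology"
  assumes "mono g" "continuous (at_right z) f" "z < w\<^sub>0"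
    and agree: "\<And>w. z < w \<Longrightarrow> \<exists>s. z < s \<and> s < w \<and> f s = g s"
  shows "g z \<le> f z"
proof (rule ccontr)
  assume "\<not> g z \<le> f z"
  have "(f \<longlongrightarrow> f z) (at_right z)" using assms(2) by (simp add: continuous_within)
  then have "\<forall>\<^sub>F w in at_right z. f w < g z" using \<open>\<not> g z \<le> f z\<close> by (simp add: order_tendstoD(2))
  then obtain b where "z < b" and below: "\<And>w. z < w \<Longrightarrow> w < b \<Longrightarrow> f w < g z"
    unfolding eventually_at_right[OF assms(3)] by blast
  then obtain s where "z < s" "s < b" "f s = g s" using agree by blast
  then have "g z \<le> f s" using \<open>mono g\<close> by (simp add: mono_def)
  then show False using below[OF \<open>z < s\<close> \<open>s < b\<close>] by simp
qed

lemma Jspace_fun_eqI: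
  assumes f: "(\<eta>, f) \<in> Jspace" and g: "(\<eta>, g) \<in> Jspace"
    and blocks: "\<And>U. U \<in> \<eta> \<Longrightarrow> fblock f U = fblock g U" and top: "f top = g top"
  shows "f = g"
proof
  fix z
  have \<eta>: "\<eta> \<in> IH" by (rule JspaceD(1)[OF f])
  show "f z = g z"
  proof (cases "ennreal (IPnorm \<eta>) \<le> z")
    case True
    show ?thesis unfolding JspaceD(5)[OF f True] JspaceD(5)[OF g True] by (rule top)
  next
    case False
    then have z: "z < ennreal (IPnorm \<eta>)" by simp
    have agree: "\<exists>s. z < s \<and> s < w \<and> f s = g s" if zw: "z < w" for w
    proof -
      obtain U s where "U \<in> \<eta>" "s \<in> U" "z < ennreal s" "ennreal s < w"
        using IH_blocks_dense[OF \<eta> z zw] by blast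
      then show ?thesis
        using JspaceD(4)[OF f] JspaceD(4)[OF g] blocks by (intro exI[of _ "ennreal s"]) simp
    qed
    have "g z \<le> f z"
      by (rule mono_le_at_right_if_agree_densely[OF JspaceD(2)[OF g] JspaceD(3)[OF f] z agree])
    moreover have "f z \<le> g z"
      using agree
      by (intro mono_le_at_right_if_agree_densely[OF JspaceD(2)[OF f] JspaceD(3)[OF g] z]) metis
    ultimately show ?thesis by simp
  qed
qed

lemma dJ_eq_0_imp_eq:
  assumes x: "x \<in> Jspace" and y: "y \<in> Jspace" and "dJ x y = 0"
  shows "x = y"
proof -
  obtain \<eta> f \<beta> g where xy: "x = (\<eta>, f)" "y = (\<beta>, g)" by fastforce
  have "dJ y x = 0" using \<open>dJ x y = 0\<close> dJ_commute by simp
  then have "\<eta> = \<beta>" using dJ_eq_0_block[OF x y \<open>dJ x y = 0\<close>] dJ_eq_0_block[OF y x] xy by auto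
  moreover have "fblock f U = fblock g U" if "U \<in> \<eta>" for U
    using dJ_eq_0_block[OF x y \<open>dJ x y = 0\<close>] that xy by simp
  moreover have "f top = g top"
    using dJ_ge_top[of x y] Jspace_fst_IH[OF x] Jspace_fst_IH[OF y] \<open>dJ x y = 0\<close> xy by simp
  ultimately show ?thesis using Jspace_fun_eqI x y xy by metis
qed

lemma Metric_space_Jspace: "Metric_space Jspace dJ"
proof
  show "x \<in> Jspace \<Longrightarrow> y \<in> Jspace \<Longrightarrow> dJ x y = 0 \<longleftrightarrow> x = y" for x y
    using dJ_eq_0_imp_eq dJ_self by blast
qed (use dJ_nonneg dJ_commute dJ_triangle in auto)

section \<open>Failure of local compactness\<close>

interpretation J: Metric_space Jspace dJ
  by (rule Metric_space_Jspace)

definition J_norm_less :: "real \<Rightarrow> (real set set \<times> (ennreal \<Rightarrow> real)) set" where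
  "J_norm_less c = {x \<in> Jspace. IPnorm (fst x) < c}"

definition J_block_longer :: "real \<Rightarrow> (real set set \<times> (ennreal \<Rightarrow> real)) set" where
  "J_block_longer t = {x \<in> Jspace. \<exists>U\<in>fst x. t < Leb U}"

lemma openin_J_norm_less: "openin J.mtopology (J_norm_less c)"
  unfolding J.openin_mtopology
proof (intro conjI allI impI)
  show "J_norm_less c \<subseteq> Jspace" unfolding J_norm_less_def by blast
  fix y assume "y \<in> J_norm_less c"
  then have y: "y \<in> Jspace" "IPnorm (fst y) < c" unfolding J_norm_less_def by auto
  show "\<exists>r>0. J.mball y r \<subseteq> J_norm_less c"
  proof (intro exI conjI subsetI)
    show "0 < c - IPnorm (fst y)" using y(2) by simp
    fix z assume "z \<in> J.mball y (c - IPnorm (fst y))"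
    then have z: "z \<in> Jspace" "dJ y z < c - IPnorm (fst y)" by auto
    note IH = Jspace_fst_IH[OF y(1)] Jspace_fst_IH[OF z(1)]
    obtain P where "matching (fst y) (fst z) P" "matching_cost y z P < c - IPnorm (fst y)"
      by (rule dJ_less_imp_matching[OF IH z(2)])
    then have "IPnorm (fst z) < c" using IPnorm_le_matching_cost[OF IH] by fastforce
    then show "z \<in> J_norm_less c" using z(1) unfolding J_norm_less_def by blast
  qed
qed

lemma openin_J_block_longer:
  assumes "0 \<le> t"
  shows "openin J.mtopology (J_block_longer t)"
  unfolding J.openin_mtopology
proof (intro conjI allI impI)
  show "J_block_longer t \<subseteq> Jspace" unfolding J_block_longer_def by blast
  fix y assume "y \<in> J_block_longer t"
  then obtain U where y: "y \<in> Jspace" and U: "U \<in> fst y" "t < Leb U"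
    unfolding J_block_longer_def by blast
  show "\<exists>r>0. J.mball y r \<subseteq> J_block_longer t"
  proof (intro exI conjI subsetI)
    show "0 < Leb U - t" using U(2) by simp
    fix z assume "z \<in> J.mball y (Leb U - t)"
    then have z: "z \<in> Jspace" "dJ y z < Leb U - t" by auto
    note IH = Jspace_fst_IH[OF y] Jspace_fst_IH[OF z(1)]
    obtain P where P: "matching (fst y) (fst z) P" "matching_cost y z P < Leb U - t"
      by (rule dJ_less_imp_matching[OF IH z(2)])
    then have "\<not> Leb U \<le> left_cost (fst y) P"
      using matching_cost_ge(1)[where p=y and q=z and P=P] assms by linarith
    then obtain V where UV: "(U, V) \<in> P"
      using unmatched_Leb_le_left_cost[OF IH P(1) U(1)] by blast
    have "\<bar>Leb U - Leb V\<bar> \<le> mismatch P"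
      using mismatch_ge_pair[OF _ UV] P(1) unfolding matching_def by blast
    also have "\<dots> < Leb U - t"
      using mismatch_le_left_cost[OF IH P(1)] matching_cost_ge(1)[where p=y and q=z and P=P]
        P(2)
      by linarith
    finally have "t < Leb V" by linarith
    moreover have "V \<in> fst z" using UV P(1) unfolding matching_def by blast
    ultimately show "z \<in> J_block_longer t" using z(1) unfolding J_block_longer_def by blast
  qed
qed

lemma J_block_longer_antimono: "t \<le> t' \<Longrightarrow> J_block_longer t' \<subseteq> J_block_longer t"
  unfolding J_block_longer_def using order_le_less_trans by blast

lemma compactin_J_subset_norm_less_Un_block_longer:
  assumes K: "compactin J.mtopology K" and "0 < c"
  obtains t where "0 < t" "K \<subseteq> J_norm_less c \<union> J_block_longer t"
proof -
  let ?\<U> = "insert (J_norm_less c) (J_block_longer ` {0<..})"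
  have "K \<subseteq> \<Union>?\<U>"
  proof
    fix x assume "x \<in> K"
    then have x: "x \<in> Jspace" using compactin_subset_topspace[OF K] by auto
    show "x \<in> \<Union>?\<U>"
    proof (cases "fst x = {}")
      case True
      then have "IPnorm (fst x) = 0" using IPnorm_eqI[OF is_IP_on_empty] by simp
      then show ?thesis using x \<open>0 < c\<close> unfolding J_norm_less_def by auto
    next
      case False
      then obtain U where U: "U \<in> fst x" by blast
      then have "0 < Leb U" using IH_block_Leb_pos[OF Jspace_fst_IH[OF x]] by blast
      then have "x \<in> J_block_longer (Leb U / 2)" using x U unfolding J_block_longer_def by force
      then show ?thesis using \<open>0 < Leb U\<close> by auto
    qed
  qed
  moreover have "openin J.mtopology V" if "V \<in> ?\<U>" for V
    using that openin_J_norm_less openin_J_block_longer by auto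
  ultimately obtain \<F> where \<F>: "finite \<F>" "\<F> \<subseteq> ?\<U>" "K \<subseteq> \<Union>\<F>"
    using K unfolding compactin_def by meson
  obtain T where T: "T \<subseteq> {0<..}" "finite T" "\<F> - {J_norm_less c} = J_block_longer ` T"
    using finite_subset_image[of "\<F> - {J_norm_less c}" J_block_longer "{0<..}"] \<F>(1,2) by blast
  define t where "t = Min (insert 1 T)"
  have "0 < t" unfolding t_def using T(1,2) by auto
  have "V \<subseteq> J_norm_less c \<union> J_block_longer t" if V: "V \<in> \<F>" for V
  proof (cases "V = J_norm_less c")
    case False
    then obtain s where s: "s \<in> T" "V = J_block_longer s" using V T(3) by blast
    then have "t \<le> s" unfolding t_def using T(2) by simp
    then show ?thesis using J_block_longer_antimono s(2) by blast
  qed blast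
  then have "K \<subseteq> J_norm_less c \<union> J_block_longer t" using \<F>(3) by blast
  with \<open>0 < t\<close> show ?thesis by (rule that)
qed

definition uniform_IP :: "nat \<Rightarrow> real \<Rightarrow> real set set" where
  "uniform_IP n h = (\<lambda>k. {real k * h<..<real (Suc k) * h}) ` {..<n}"

lemma uniform_IP_gaps:
  assumes "0 < h" "x \<in> {0..real n * h}" "x \<notin> \<Union>(uniform_IP n h)"
  shows "x \<in> (\<lambda>k. real k * h) ` {..n}"
proof -
  define k where "k = nat \<lfloor>x / h\<rfloor>"
  have "real k = of_int \<lfloor>x / h\<rfloor>" unfolding k_def using assms(1,2) by simp
  then have "real k \<le> x / h" "x / h < real k + 1"
    using of_int_floor_le[of "x / h"] real_of_int_floor_add_one_gt[of "x / h"] by simp_all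
  then have k: "real k * h \<le> x" "x < real (Suc k) * h"
    using assms(1) by (simp_all add: field_simps)
  show ?thesis
  proof (cases "k < n")
    case True
    then have "x \<notin> {real k * h<..<real (Suc k) * h}"
      using assms(3) unfolding uniform_IP_def by blast
    then show ?thesis using k True by (intro image_eqI[of _ _ k]) auto
  next
    case False
    then have "real n * h \<le> real k * h" using assms(1) by simp
    then show ?thesis using k assms(2) by (intro image_eqI[of _ _ n]) auto
  qed
qed

lemma is_IP_on_uniform_IP:
  assumes "0 < h"
  shows "is_IP_on (uniform_IP n h) (real n * h)"
  unfolding is_IP_on_def
proof (intro conjI)
  show "0 \<le> real n * h" using assms by simp
  show "\<forall>U\<in>uniform_IP n h. \<exists>a b. 0 \<le> a \<and> a < b \<and> b \<le> real n * h \<and> U = {a<..<b}"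
  proof
    fix U assume "U \<in> uniform_IP n h"
    then obtain k where "k < n" "U = {real k * h<..<real (Suc k) * h}"
      unfolding uniform_IP_def by blast
    moreover have "real (Suc k) * h \<le> real n * h" using \<open>k < n\<close> assms by simp
    ultimately show "\<exists>a b. 0 \<le> a \<and> a < b \<and> b \<le> real n * h \<and> U = {a<..<b}"
      using assms by (intro exI[of _ "real k * h"] exI[of _ "real (Suc k) * h"]) simp
  qed
  show "disjoint (uniform_IP n h)"
  proof (rule pairwiseI)
    fix U V assume "U \<in> uniform_IP n h" "V \<in> uniform_IP n h" "U \<noteq> V"
    then obtain k j where "U = {real k * h<..<real (Suc k) * h}"
      "V = {real j * h<..<real (Suc j) * h}" "k \<noteq> j"
      unfolding uniform_IP_def by blast
    moreover have "real (Suc k) * h \<le> real j * h \<or> real (Suc j) * h \<le> real k * h"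
      using \<open>k \<noteq> j\<close> assms by (cases "k < j") auto
    ultimately show "disjnt U V" unfolding disjnt_def by auto
  qed
  have "{0..real n * h} - \<Union>(uniform_IP n h) \<subseteq> (\<lambda>k. real k * h) ` {..n}"
    using uniform_IP_gaps[OF assms] by blast
  then show "{0..real n * h} - \<Union>(uniform_IP n h) \<in> null_sets lborel"
    by (rule finite_imp_null_set_lborel[OF finite_subset]) simp
qed

lemma Leb_uniform_IP: "0 < h \<Longrightarrow> U \<in> uniform_IP n h \<Longrightarrow> Leb U = h"
  unfolding uniform_IP_def by (auto simp: Leb_Ioo algebra_simps)

lemma fine_partition_near_empty:
  assumes "0 < a" "0 < t"
  obtains q where "q \<in> Jspace" "IPnorm (fst q) = a" "\<forall>U\<in>fst q. Leb U \<le> t"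
    "dJ ({}, \<lambda>_. 0) q \<le> a"
proof -
  define n where "n = nat \<lceil>a / t\<rceil>"
  have "a / t \<le> real n" "0 < n" unfolding n_def using assms by (auto simp: real_nat_ceiling_ge)
  define h where "h = a / real n"
  have "0 < h" "h \<le> t" "real n * h = a"
    unfolding h_def using assms \<open>a / t \<le> real n\<close> \<open>0 < n\<close> by (auto simp: field_simps)
  have IP: "is_IP_on (uniform_IP n h) a"
    using is_IP_on_uniform_IP[OF \<open>0 < h\<close>, of n] \<open>real n * h = a\<close> by simp
  then have IH: "uniform_IP n h \<in> IH" unfolding IH_def by blast
  show ?thesis
  proof (rule that[of "(uniform_IP n h, \<lambda>_. 0)"])
    show "(uniform_IP n h, \<lambda>_. 0) \<in> Jspace" by (rule zero_fun_in_Jspace[OF IH])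
    show "IPnorm (fst (uniform_IP n h, \<lambda>_. 0 :: real)) = a" using IPnorm_eqI[OF IP] by simp
    show "\<forall>U\<in>fst (uniform_IP n h, \<lambda>_. 0 :: real). Leb U \<le> t"
      using Leb_uniform_IP[OF \<open>0 < h\<close>] \<open>h \<le> t\<close> by simp
    show "dJ ({}, \<lambda>_. 0) (uniform_IP n h, \<lambda>_. 0) \<le> a"
      using dJ_le_max_IPnorm[of "({}, \<lambda>_. 0)" "(uniform_IP n h, \<lambda>_. 0)"] empty_in_IH IH
        IPnorm_eqI[OF IP] IPnorm_eqI[OF is_IP_on_empty] assms(1)
      by simp
  qed
qed

theorem lemma3p14:
  shows "\<not> locally_compact_space (Metric_space.mtopology Jspace dJ)"
proof
  assume "locally_compact_space J.mtopology"
  define x\<^sub>0 where "x\<^sub>0 = ({} :: real set set, (\<lambda>_. 0) :: ennreal \<Rightarrow> real)"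
  have x\<^sub>0: "x\<^sub>0 \<in> topspace J.mtopology"
    unfolding x\<^sub>0_def using zero_fun_in_Jspace[OF empty_in_IH] by simp
  then obtain U K where U: "openin J.mtopology U" "x\<^sub>0 \<in> U"
    and K: "compactin J.mtopology K" "U \<subseteq> K"
    using \<open>locally_compact_space J.mtopology\<close> unfolding locally_compact_space_def by blast
  obtain r where "0 < r" and ball: "J.mball x\<^sub>0 r \<subseteq> K"
    using U K(2) unfolding J.openin_mtopology by blast
  obtain t where "0 < t" and K_sub: "K \<subseteq> J_norm_less (r / 2) \<union> J_block_longer t"
    using compactin_J_subset_norm_less_Un_block_longer[OF K(1), of "r / 2"] \<open>0 < r\<close> by auto
  obtain q where q: "q \<in> Jspace" "IPnorm (fst q) = r / 2" "\<forall>V\<in>fst q. Leb V \<le> t"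
    "dJ x\<^sub>0 q \<le> r / 2"
    using fine_partition_near_empty[of "r / 2" t] \<open>0 < r\<close> \<open>0 < t\<close> unfolding x\<^sub>0_def by auto
  have "q \<in> J.mball x\<^sub>0 r" using q(1,4) x\<^sub>0 \<open>0 < r\<close> by simp
  then show False using ball K_sub q(2,3) unfolding J_norm_less_def J_block_longer_def by force
qed

end
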